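(* Every matroid $M$, regarded as the set system of its independent sets, belongs to the class $\mathfrak{J}_+$. That is, all coefficients $j_k$ ($0\le k\le t_M$) of its $J$-polynomial $J_M(u)=\sum_k j_ku^k$ are nonnegative.
   Context: A set system $\Omega$ on a finite set $E$ is a nonempty collection of subsets of $E$ (its faces). Define: - $d_\Omega=\max\{\#S:S\in\Omega\}$; - $f_i$ is the number of faces of size $i$; - $F_\Omega(z)=\sum_{i=0}^d f_iz^i$. Factor $F_\Omega(z)=(1+z)^{d-t}\widetilde F_\Omega(z)$ with $\widetilde F_\Omega(-1)\ne0$, where $t=t_\Omega=\deg\widetilde F_\Omega$. The $J$-polynomial is $J_\Omega(u)=(-2)^t\widetilde F_\Omega\big(\frac{-1-u}{2}\big)=\sum_{k=0}^t j_ku^k$. The class $\mathfrak{J}_+$ consists of the set systems with $j_k\ge0$ for all $0\le k\le t_\Omega$. *)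

theory Defs
  imports "HOL-Computational_Algebra.Polynomial"
begin

definition matroid :: "'a set \<Rightarrow> 'a set set \<Rightarrow> bool" where
  "matroid E \<I> \<longleftrightarrow> finite E \<and> \<I> \<subseteq> Pow E \<and> {} \<in> \<I> \<and>
     (\<forall>A B. B \<in> \<I> \<and> A \<subseteq> B \<longrightarrow> A \<in> \<I>) \<and>
     (\<forall>A B. A \<in> \<I> \<and> B \<in> \<I> \<and> card A < card B \<longrightarrow> (\<exists>x\<in>B - A. insert x A \<in> \<I>))"

definition set_system :: "'a set \<Rightarrow> 'a set set \<Rightarrow> bool" where
  "set_system E \<Omega> \<longleftrightarrow> finite E \<and> \<Omega> \<noteq> {} \<and> \<Omega> \<subseteq> Pow E"

definition ss_dim :: "'a set set \<Rightarrow> nat" where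
  "ss_dim \<Omega> = Max (card ` \<Omega>)"

definition ss_f :: "'a set set \<Rightarrow> nat \<Rightarrow> nat" where
  "ss_f \<Omega> i = card {S \<in> \<Omega>. card S = i}"

definition F_poly :: "'a set set \<Rightarrow> real poly" where
  "F_poly \<Omega> = (\<Sum>i\<le>ss_dim \<Omega>. monom (real (ss_f \<Omega> i)) i)"

text \<open>F(z) = (1+z)^(d-t) * Ftilde(z) with Ftilde(-1) \<noteq> 0; the exponent is the
  multiplicity of -1 as a root of F.\<close>
definition F_tilde :: "'a set set \<Rightarrow> real poly" where
  "F_tilde \<Omega> = F_poly \<Omega> div ([:1, 1:] ^ order (-1) (F_poly \<Omega>))"

definition ss_t :: "'a set set \<Rightarrow> nat" where
  "ss_t \<Omega> = degree (F_tilde \<Omega>)"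

definition J_poly :: "'a set set \<Rightarrow> real poly" where
  "J_poly \<Omega> = smult ((-2) ^ ss_t \<Omega>) (pcompose (F_tilde \<Omega>) [:-1/2, -1/2:])"

definition in_J_plus :: "'a set set \<Rightarrow> bool" where
  "in_J_plus \<Omega> \<longleftrightarrow> (\<forall>k\<le>ss_t \<Omega>. coeff (J_poly \<Omega>) k \<ge> 0)"

end

theory Submission imports Defs begin

(* Substituting z = (-1-u)/2 turns (-2)^d F(z) into
     G(u) = sum over independent S of (-2)^(d-|S|) (1+u)^|S|,
   and J = G / (u-1)^(d-t). A coloop e splits off exactly one factor: G_M = (u-1) G_{M\e}.
   So it suffices to show that G has nonnegative coefficients and G(1) > 0 when M is
   coloop-free; G(1) > 0 because the leading coefficient of G counts the bases. The derivative is G' = sum_e G_{M/e},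
   and contractions of coloop-free matroids are coloop-free; this settles all coefficients
   but the constant one. For that one, deletion-contraction at a non-loop e gives
   G_M(0) = G_{M\e}(0) + G_{M/e}(0). If M\e has a coloop f, then G_{M\e}(0) = -G_{M\e\f}(0),
   and this cancels against G_{M/e}(0), since (M/e)\f = M\e\f and deletion-contraction
   at f in M/e leaves G_{M/e/f}(0) >= 0. *)

section \<open>The face polynomial and the J-polynomial\<close>

lemma poly_one_pos_if_coeffs_nonneg:
  fixes p :: "'a::linordered_idom poly"
  assumes "\<And>i. 0 \<le> coeff p i" and "0 < coeff p n"
  shows "0 < poly p 1"
proof -
  have "n \<le> degree p" using assms(2) by (intro le_degree) auto
  then have "coeff p n \<le> (\<Sum>i\<le>degree p. coeff p i)"
    using assms(1) by (intro member_le_sum) auto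
  then show ?thesis using assms(2) by (simp add: poly_altdef)
qed

lemma linear_power_mult_cancel:
  fixes p q :: "'a::idom poly"
  assumes eq: "[:-a, 1:] ^ m * p = [:-a, 1:] ^ k * q"
    and "poly p a \<noteq> 0" and "poly q a \<noteq> 0"
  shows "p = q"
proof -
  have "p \<noteq> 0" "q \<noteq> 0" using assms(2,3) by auto
  then have "order a ([:-a, 1:] ^ m * p) = m" "order a ([:-a, 1:] ^ k * q) = k"
    using assms(2,3) by (simp_all add: order_mult order_power_n_n order_0I)
  then have "m = k" using eq by simp
  then show ?thesis using eq by simp
qed

lemma card_le_ss_dim: "finite \<Omega> \<Longrightarrow> S \<in> \<Omega> \<Longrightarrow> card S \<le> ss_dim \<Omega>"
  unfolding ss_dim_def by simp

lemma ss_dim_attained: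
  assumes "finite \<Omega>" and "\<Omega> \<noteq> {}"
  obtains S where "S \<in> \<Omega>" and "card S = ss_dim \<Omega>"
proof -
  have "ss_dim \<Omega> \<in> card ` \<Omega>" unfolding ss_dim_def using assms by (intro Max_in) auto
  then show ?thesis using that by (auto simp: image_iff)
qed

lemma ss_dim_eqI:
  assumes "finite \<Omega>" and "S \<in> \<Omega>" and "card S = d" and "\<And>T. T \<in> \<Omega> \<Longrightarrow> card T \<le> d"
  shows "ss_dim \<Omega> = d"
  unfolding ss_dim_def using assms by (intro Max_eqI) auto

lemma coeff_F_poly: "coeff (F_poly \<Omega>) n = (if n \<le> ss_dim \<Omega> then real (ss_f \<Omega> n) else 0)"
  unfolding F_poly_def coeff_sum by (simp add: coeff_monom)

lemma F_poly_eq_sum: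
  assumes "finite \<Omega>"
  shows "F_poly \<Omega> = (\<Sum>S\<in>\<Omega>. monom 1 (card S))"
proof -
  have "(\<Sum>S\<in>\<Omega>. monom (1::real) (card S))
      = (\<Sum>i\<le>ss_dim \<Omega>. \<Sum>S\<in>{S\<in>\<Omega>. card S = i}. monom 1 (card S))"
    by (rule sum.group[symmetric]) (use assms card_le_ss_dim in auto)
  also have "\<dots> = (\<Sum>i\<le>ss_dim \<Omega>. monom (real (ss_f \<Omega> i)) i)"
    using assms by (simp add: ss_f_def of_nat_poly smult_monom)
  finally show ?thesis unfolding F_poly_def by simp
qed

lemma degree_F_poly:
  assumes "finite \<Omega>" and "\<Omega> \<noteq> {}"
  shows "F_poly \<Omega> \<noteq> 0" and "degree (F_poly \<Omega>) = ss_dim \<Omega>"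
proof -
  obtain B where "B \<in> \<Omega>" "card B = ss_dim \<Omega>" using ss_dim_attained assms .
  then have "ss_f \<Omega> (ss_dim \<Omega>) \<noteq> 0" unfolding ss_f_def using assms(1) by auto
  then have top: "coeff (F_poly \<Omega>) (ss_dim \<Omega>) \<noteq> 0" by (simp add: coeff_F_poly)
  then show "F_poly \<Omega> \<noteq> 0" by auto
  show "degree (F_poly \<Omega>) = ss_dim \<Omega>"
    using top by (intro antisym degree_le le_degree) (auto simp: coeff_F_poly)
qed

definition G_poly :: "'a set set \<Rightarrow> real poly" where
  "G_poly \<Omega> = (\<Sum>S\<in>\<Omega>. smult ((-2) ^ (ss_dim \<Omega> - card S)) ([:1, 1:] ^ card S))"

lemma G_poly_eq_F_poly:
  assumes "finite \<Omega>"
  shows "G_poly \<Omega> = smult ((-2) ^ ss_dim \<Omega>) (pcompose (F_poly \<Omega>) [:-1/2, -1/2:])"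
proof -
  have "(-2) ^ ss_dim \<Omega> * (-1/2 - x/2) ^ card S = (-2) ^ (ss_dim \<Omega> - card S) * (1 + x) ^ card S"
    if "S \<in> \<Omega>" for S and x :: real
  proof -
    have "(-2::real) ^ ss_dim \<Omega> = (-2) ^ (ss_dim \<Omega> - card S) * (-2) ^ card S"
      using card_le_ss_dim[OF assms that] by (simp flip: power_add)
    moreover have "(-2::real) ^ card S * (-1/2 - x/2) ^ card S = (1 + x) ^ card S"
      by (simp flip: power_mult_distrib add: algebra_simps)
    ultimately show ?thesis by simp
  qed
  then have "poly (G_poly \<Omega>) x
      = poly (smult ((-2) ^ ss_dim \<Omega>) (pcompose (F_poly \<Omega>) [:-1/2, -1/2:])) x" for x
    unfolding G_poly_def F_poly_eq_sum[OF assms]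
    by (simp add: poly_sum poly_pcompose poly_monom sum_distrib_left)
  then show ?thesis by (simp add: poly_eq_poly_eq_iff[symmetric] fun_eq_iff)
qed

lemma F_poly_eq_F_tilde:
  "F_poly \<Omega> = [:1, 1:] ^ order (-1) (F_poly \<Omega>) * F_tilde \<Omega>"
  unfolding F_tilde_def using order_1[of "-1" "F_poly \<Omega>"] by simp

lemma F_tilde_nonzero_at_minus_one:
  assumes "F_poly \<Omega> \<noteq> 0"
  shows "F_tilde \<Omega> \<noteq> 0" and "poly (F_tilde \<Omega>) (-1) \<noteq> 0"
proof -
  let ?m = "order (-1) (F_poly \<Omega>)"
  show nz: "F_tilde \<Omega> \<noteq> 0" using assms F_poly_eq_F_tilde[of \<Omega>] by auto
  have "?m = order (-1) ([:1, 1:] ^ ?m * F_tilde \<Omega>)" using F_poly_eq_F_tilde[of \<Omega>] by simp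
  also have "\<dots> = ?m + order (-1) (F_tilde \<Omega>)"
    using nz order_power_n_n[of "-1" ?m] by (simp add: order_mult)
  finally show "poly (F_tilde \<Omega>) (-1) \<noteq> 0" using nz by (simp add: order_eq_0_iff)
qed

lemma G_poly_eq_J_poly:
  assumes "finite \<Omega>" and "\<Omega> \<noteq> {}"
  shows "G_poly \<Omega> = [:-1, 1:] ^ order (-1) (F_poly \<Omega>) * J_poly \<Omega>"
proof -
  let ?m = "order (-1) (F_poly \<Omega>)"
  have "ss_dim \<Omega> = ?m + ss_t \<Omega>"
    using degree_F_poly[OF assms] F_poly_eq_F_tilde[of \<Omega>] F_tilde_nonzero_at_minus_one(1)
    unfolding ss_t_def by (metis degree_mult_eq degree_linear_power mult_eq_0_iff)
  then have "poly (G_poly \<Omega>) x = poly ([:-1, 1:] ^ ?m * J_poly \<Omega>) x" for x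
    unfolding G_poly_eq_F_poly[OF assms(1)] J_poly_def
    by (subst F_poly_eq_F_tilde)
       (simp add: poly_pcompose power_add power_mult_distrib[symmetric] algebra_simps)
  then show ?thesis by (simp add: poly_eq_poly_eq_iff[symmetric] fun_eq_iff)
qed

lemma J_poly_eqI:
  assumes "finite \<Omega>" and "\<Omega> \<noteq> {}"
    and "G_poly \<Omega> = [:-1, 1:] ^ k * q" and "poly q 1 \<noteq> 0"
  shows "J_poly \<Omega> = q"
proof (rule linear_power_mult_cancel)
  show "[:-1, 1:] ^ order (-1) (F_poly \<Omega>) * J_poly \<Omega> = [:-1, 1:] ^ k * q"
    using G_poly_eq_J_poly[OF assms(1,2)] assms(3) by simp
  show "poly (J_poly \<Omega>) 1 \<noteq> 0"
    using F_tilde_nonzero_at_minus_one(2) degree_F_poly(1)[OF assms(1,2)]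
    by (simp add: J_poly_def poly_pcompose)
qed (use assms(4) in simp)

section \<open>Matroid minors and coloops\<close>

definition deletion :: "'a set set \<Rightarrow> 'a \<Rightarrow> 'a set set" where
  "deletion \<Omega> e = {S \<in> \<Omega>. e \<notin> S}"

definition contraction :: "'a set set \<Rightarrow> 'a \<Rightarrow> 'a set set" where
  "contraction \<Omega> e = {S. e \<notin> S \<and> insert e S \<in> \<Omega>}"

definition bases :: "'a set set \<Rightarrow> 'a set set" where
  "bases \<Omega> = {B \<in> \<Omega>. card B = ss_dim \<Omega>}"

definition coloop :: "'a set set \<Rightarrow> 'a \<Rightarrow> bool" where
  "coloop \<Omega> e \<longleftrightarrow> (\<forall>B\<in>bases \<Omega>. e \<in> B)"

definition coloop_free :: "'a set set \<Rightarrow> bool" where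
  "coloop_free \<Omega> \<longleftrightarrow> (\<forall>e. \<not> coloop \<Omega> e)"

lemma sum_containing_eq_sum_contraction:
  "(\<Sum>S\<in>{S\<in>\<Omega>. e \<in> S}. g S) = (\<Sum>S\<in>contraction \<Omega> e. g (insert e S))"
  by (rule sum.reindex_bij_witness[where i = "insert e" and j = "\<lambda>S. S - {e}"])
     (auto simp: contraction_def insert_absorb)

lemma sum_deletion_contraction:
  assumes "finite \<Omega>"
  shows "(\<Sum>S\<in>\<Omega>. g S) = (\<Sum>S\<in>deletion \<Omega> e. g S) + (\<Sum>S\<in>contraction \<Omega> e. g (insert e S))"
proof -
  have "(\<Sum>S\<in>\<Omega>. g S) = (\<Sum>S\<in>deletion \<Omega> e. g S) + (\<Sum>S\<in>{S\<in>\<Omega>. e \<in> S}. g S)"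
    using assms by (subst sum.union_disjoint[symmetric]) (auto simp: deletion_def intro: sum.cong)
  then show ?thesis by (simp add: sum_containing_eq_sum_contraction)
qed

lemma coeff_G_poly_ss_dim:
  assumes "finite \<Omega>"
  shows "coeff (G_poly \<Omega>) (ss_dim \<Omega>) = real (card (bases \<Omega>))"
proof -
  have "coeff (smult ((-2) ^ (ss_dim \<Omega> - card S)) ([:1, 1:] ^ card S)) (ss_dim \<Omega>)
      = (if card S = ss_dim \<Omega> then 1 else (0::real))" if "S \<in> \<Omega>" for S
  proof (cases "card S = ss_dim \<Omega>")
    case False
    then have "card S < ss_dim \<Omega>" using card_le_ss_dim[OF assms that] by simp
    then show ?thesis by (simp add: coeff_eq_0 degree_linear_power)
  qed (simp add: coeff_linear_power)
  then have "coeff (G_poly \<Omega>) (ss_dim \<Omega>) = (\<Sum>S\<in>\<Omega>. if card S = ss_dim \<Omega> then 1 else 0)"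
    unfolding G_poly_def coeff_sum by (intro sum.cong) auto
  then show ?thesis using assms by (simp add: sum.If_cases bases_def Int_def conj_commute)
qed

lemma finite_contraction: "finite \<Omega> \<Longrightarrow> finite (contraction \<Omega> e)"
  by (rule finite_subset[of _ "(\<lambda>S. S - {e}) ` \<Omega>"])
     (auto simp: contraction_def image_iff intro!: exI[of _ "insert e _"])

context
  fixes E :: "'a set" and I :: "'a set set"
  assumes matroid: "matroid E I"
begin

lemma finite_ground: "finite E"
  using matroid unfolding matroid_def by simp

lemma indep_subset_ground: "S \<in> I \<Longrightarrow> S \<subseteq> E"
  using matroid unfolding matroid_def by blast

lemma finite_indep: "S \<in> I \<Longrightarrow> finite S"
  using finite_ground indep_subset_ground finite_subset by blast

lemma finite_indeps: "finite I"
  using matroid finite_ground unfolding matroid_def by (meson finite_Pow_iff finite_subset)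

lemma empty_indep: "{} \<in> I"
  using matroid unfolding matroid_def by simp

lemma indep_subset: "S \<in> I \<Longrightarrow> T \<subseteq> S \<Longrightarrow> T \<in> I"
  using matroid unfolding matroid_def by blast

lemma indep_augment: "A \<in> I \<Longrightarrow> B \<in> I \<Longrightarrow> card A < card B \<Longrightarrow> \<exists>x\<in>B - A. insert x A \<in> I"
  using matroid unfolding matroid_def by blast

lemma indep_card_le_rank: "S \<in> I \<Longrightarrow> card S \<le> ss_dim I"
  using card_le_ss_dim finite_indeps by blast

lemma bases_nonempty: "bases I \<noteq> {}"
  using ss_dim_attained[OF finite_indeps] empty_indep unfolding bases_def by blast

lemma indep_augment_to_card:
  assumes "S \<in> I" and "B \<in> I" and "card S \<le> card B"
  shows "\<exists>T\<in>I. S \<subseteq> T \<and> T \<subseteq> S \<union> B \<and> card T = card B"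
  using assms(1,3)
proof (induction "card B - card S" arbitrary: S)
  case (Suc k)
  then have "card S < card B" by simp
  then obtain x where x: "x \<in> B - S" "insert x S \<in> I"
    using indep_augment[OF Suc.prems(1) assms(2)] by blast
  moreover have "card (insert x S) = Suc (card S)"
    using x finite_indep[OF Suc.prems(1)] by simp
  ultimately obtain T where "T \<in> I" "insert x S \<subseteq> T" "T \<subseteq> insert x S \<union> B" "card T = card B"
    using Suc.hyps(1)[of "insert x S"] Suc.hyps(2) by fastforce
  then show ?case using x by blast
qed auto

lemma indep_extend_to_basis:
  assumes "S \<in> I"
  shows "\<exists>B\<in>bases I. S \<subseteq> B"
proof -
  obtain B where "B \<in> I" "card B = ss_dim I"
    using bases_nonempty unfolding bases_def by blast
  then show ?thesis
    using indep_augment_to_card[OF assms] indep_card_le_rank[OF assms]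
    unfolding bases_def by fastforce
qed

lemma matroid_deletion: "matroid (E - {e}) (deletion I e)"
  unfolding matroid_def
proof (intro conjI allI impI)
  show "finite (E - {e})" using finite_ground by simp
  show "deletion I e \<subseteq> Pow (E - {e})"
    using indep_subset_ground unfolding deletion_def by blast
  show "{} \<in> deletion I e" using empty_indep unfolding deletion_def by simp
next
  fix A B
  show "B \<in> deletion I e \<and> A \<subseteq> B \<Longrightarrow> A \<in> deletion I e"
    using indep_subset unfolding deletion_def by blast
  assume "A \<in> deletion I e \<and> B \<in> deletion I e \<and> card A < card B"
  then show "\<exists>x\<in>B - A. insert x A \<in> deletion I e"
    using indep_augment unfolding deletion_def by fastforce
qed

lemma matroid_contraction:
  assumes "{e} \<in> I"
  shows "matroid (E - {e}) (contraction I e)"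
  unfolding matroid_def
proof (intro conjI allI impI)
  show "finite (E - {e})" using finite_ground by simp
  show "contraction I e \<subseteq> Pow (E - {e})"
    using indep_subset_ground unfolding contraction_def by blast
  show "{} \<in> contraction I e" using assms unfolding contraction_def by simp
next
  fix A B
  show "B \<in> contraction I e \<and> A \<subseteq> B \<Longrightarrow> A \<in> contraction I e"
    using indep_subset[of "insert e B" "insert e A"] unfolding contraction_def by blast
  assume AB: "A \<in> contraction I e \<and> B \<in> contraction I e \<and> card A < card B"
  moreover have "finite A" "finite B"
    using AB finite_indep[of "insert e A"] finite_indep[of "insert e B"]
    unfolding contraction_def by auto
  ultimately have "card (insert e A) < card (insert e B)"
    unfolding contraction_def by simp
  then obtain x where "x \<in> insert e B - insert e A" "insert x (insert e A) \<in> I"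
    using AB indep_augment unfolding contraction_def by blast
  then have "x \<in> B - A" "insert e (insert x A) \<in> I" "e \<notin> insert x A"
    using AB unfolding contraction_def by (auto simp: insert_commute)
  then show "\<exists>x\<in>B - A. insert x A \<in> contraction I e"
    unfolding contraction_def by blast
qed

lemma contraction_loop: "{e} \<notin> I \<Longrightarrow> contraction I e = {}"
  using indep_subset unfolding contraction_def by blast

lemma deletion_loop: "{e} \<notin> I \<Longrightarrow> deletion I e = I"
  using indep_subset unfolding deletion_def by blast

lemma ss_dim_deletion:
  assumes "\<not> coloop I e"
  shows "ss_dim (deletion I e) = ss_dim I"
proof -
  obtain B where "B \<in> bases I" "e \<notin> B" using assms unfolding coloop_def by blast
  then show ?thesis
    using finite_indeps indep_card_le_rank unfolding bases_def deletion_def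
    by (intro ss_dim_eqI[of _ B]) auto
qed

lemma ss_dim_contraction:
  assumes "{e} \<in> I"
  shows "ss_dim (contraction I e) = ss_dim I - 1"
proof -
  obtain B where B: "B \<in> I" "card B = ss_dim I" "e \<in> B"
    using indep_extend_to_basis[OF assms] unfolding bases_def by blast
  have "insert e (B - {e}) = B" using B(3) by blast
  then have "B - {e} \<in> contraction I e" using B(1) unfolding contraction_def by simp
  moreover have "card (B - {e}) = ss_dim I - 1" using B finite_indep[of B] by simp
  moreover have "card T \<le> ss_dim I - 1" if "T \<in> contraction I e" for T
  proof -
    have T: "insert e T \<in> I" "e \<notin> T" using that unfolding contraction_def by auto
    then have "card (insert e T) = Suc (card T)" using finite_indep[of "insert e T"] by simp
    then show ?thesis using indep_card_le_rank[OF T(1)] by simp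
  qed
  ultimately show ?thesis by (rule ss_dim_eqI[OF finite_contraction[OF finite_indeps]])
qed

lemma coloop_indep:
  assumes "coloop I e"
  shows "{e} \<in> I"
proof -
  obtain B where "B \<in> bases I" using bases_nonempty by blast
  then have "B \<in> I" "e \<in> B" using assms unfolding coloop_def bases_def by auto
  then show ?thesis using indep_subset[of B "{e}"] by simp
qed

lemma ss_dim_deletion_coloop:
  assumes "coloop I e"
  shows "ss_dim (deletion I e) = ss_dim I - 1"
proof -
  obtain B where "B \<in> bases I" using bases_nonempty by blast
  then have B: "B \<in> I" "card B = ss_dim I" "e \<in> B"
    using assms unfolding coloop_def bases_def by auto
  have "finite (deletion I e)" using finite_indeps unfolding deletion_def by simp
  moreover have "B - {e} \<in> deletion I e" "card (B - {e}) = ss_dim I - 1"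
    using B indep_subset[of B "B - {e}"] finite_indep[of B] unfolding deletion_def by auto
  moreover have "card T \<le> ss_dim I - 1" if "T \<in> deletion I e" for T
  proof -
    have "T \<in> I" "T \<notin> bases I" using that assms unfolding deletion_def coloop_def by auto
    then show ?thesis using indep_card_le_rank[of T] unfolding bases_def by simp
  qed
  ultimately show ?thesis by (rule ss_dim_eqI)
qed

lemma contraction_coloop:
  assumes "coloop I e"
  shows "contraction I e = deletion I e"
proof
  show "contraction I e \<subseteq> deletion I e"
    using indep_subset[OF _ subset_insertI] unfolding contraction_def deletion_def by blast
  show "deletion I e \<subseteq> contraction I e"
  proof
    fix S assume S: "S \<in> deletion I e"
    then obtain B where "B \<in> bases I" "S \<subseteq> B" using indep_extend_to_basis
      unfolding deletion_def by blast
    then have "B \<in> I" "insert e S \<subseteq> B" using assms unfolding coloop_def bases_def by auto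
    then show "S \<in> contraction I e"
      using S indep_subset unfolding deletion_def contraction_def by simp
  qed
qed

lemma basis_contraction:
  assumes "B \<in> bases I" and "e \<in> B"
  shows "B - {e} \<in> bases (contraction I e)"
proof -
  have "B \<in> I" "card B = ss_dim I" using assms(1) unfolding bases_def by auto
  moreover have "{e} \<in> I" using calculation(1) assms(2) indep_subset[of B "{e}"] by simp
  ultimately show ?thesis
    using assms(2) finite_indep[of B] ss_dim_contraction
    unfolding bases_def contraction_def by (simp add: insert_absorb)
qed

lemma basis_containing_avoiding:
  assumes "coloop_free I" and "{e} \<in> I" and "f \<noteq> e"
  shows "\<exists>B\<in>bases I. e \<in> B \<and> f \<notin> B"
proof -
  obtain B1 where B1: "B1 \<in> I" "card B1 = ss_dim I" "f \<notin> B1"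
    using assms(1) unfolding coloop_free_def coloop_def bases_def by blast
  obtain B2 where B2: "B2 \<in> I" "card B2 = ss_dim I" "e \<in> B2"
    using indep_extend_to_basis[OF assms(2)] unfolding bases_def by blast
  show ?thesis
  proof (cases "f \<in> B2")
    case False
    then show ?thesis using B2 unfolding bases_def by blast
  next
    case True
    have fin: "finite B2" using finite_indep[OF B2(1)] .
    have "B2 - {f} \<in> I" using indep_subset[OF B2(1), of "B2 - {f}"] by simp
    moreover have "card (B2 - {f}) < card B1" using card_Diff1_less[OF fin True] B1(2) B2(2) by simp
    ultimately obtain x where x: "x \<in> B1 - (B2 - {f})" "insert x (B2 - {f}) \<in> I"
      using indep_augment[OF _ B1(1)] by meson
    have "x \<notin> B2 - {f}" using x(1) by blast
    then have "card (insert x (B2 - {f})) = Suc (card (B2 - {f}))"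
      using fin by (metis card_insert_disjoint finite_Diff)
    also have "\<dots> = ss_dim I" using card_Suc_Diff1[OF fin True] B2(2) by linarith
    finally have "card (insert x (B2 - {f})) = ss_dim I" .
    moreover have "e \<in> insert x (B2 - {f})" and "f \<notin> insert x (B2 - {f})"
      using B2(3) assms(3) x(1) B1(3) by blast+
    ultimately show ?thesis using x(2) unfolding bases_def by (metis (mono_tags) mem_Collect_eq)
  qed
qed

lemma coloop_free_contraction:
  assumes "coloop_free I" and "{e} \<in> I"
  shows "coloop_free (contraction I e)"
  unfolding coloop_free_def coloop_def
proof
  fix f
  obtain B where "B \<in> bases I" "e \<in> B" "f \<notin> B \<or> f = e"
    using basis_containing_avoiding[OF assms] indep_extend_to_basis[OF assms(2)] by blast
  then show "\<not> (\<forall>B\<in>bases (contraction I e). f \<in> B)"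
    using basis_contraction by blast
qed

lemma deletion_contraction_eq_deletion_deletion:
  assumes "coloop_free I" and "coloop (deletion I e) f"
  shows "deletion (contraction I e) f = deletion (deletion I e) f"
proof
  show "deletion (contraction I e) f \<subseteq> deletion (deletion I e) f"
    using indep_subset[OF _ subset_insertI] unfolding deletion_def contraction_def by blast
  show "deletion (deletion I e) f \<subseteq> deletion (contraction I e) f"
  proof
    fix S assume "S \<in> deletion (deletion I e) f"
    then have S: "S \<in> I" "e \<notin> S" "f \<notin> S" unfolding deletion_def by auto
    obtain B where B: "B \<in> I" "card B = ss_dim I" "f \<notin> B"
      using assms(1) unfolding coloop_free_def coloop_def bases_def by blast
    obtain T where T: "T \<in> I" "S \<subseteq> T" "T \<subseteq> S \<union> B" "card T = ss_dim I"
      using indep_augment_to_card[OF S(1) B(1)] indep_card_le_rank[OF S(1)] B(2) by auto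
    have "f \<notin> T" using T(3) S(3) B(3) by auto
    moreover have "ss_dim (deletion I e) = ss_dim I"
      using assms(1) ss_dim_deletion unfolding coloop_free_def by blast
    ultimately have "e \<in> T"
      using assms(2) T(1,4) unfolding coloop_def bases_def deletion_def by auto
    then have "insert e S \<in> I" using indep_subset[OF T(1)] T(2) by simp
    then show "S \<in> deletion (contraction I e) f"
      using S unfolding deletion_def contraction_def by simp
  qed
qed

section \<open>Recursions for G\<close>

lemma G_poly_deletion_contraction:
  assumes "{e} \<in> I" and "\<not> coloop I e"
  shows "G_poly I = G_poly (deletion I e) + [:1, 1:] * G_poly (contraction I e)"
proof -
  let ?h = "\<lambda>d S. smult ((-2::real) ^ (d - card S)) ([:1, 1:] ^ card S)"
  have "?h (ss_dim I) (insert e S) = [:1, 1:] * ?h (ss_dim (contraction I e)) S"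
    if "S \<in> contraction I e" for S
  proof -
    have "e \<notin> S" "finite S"
      using that finite_indep[of "insert e S"] unfolding contraction_def by auto
    then show ?thesis using ss_dim_contraction[OF assms(1)] by (simp add: mult_smult_right)
  qed
  then have "(\<Sum>S\<in>contraction I e. ?h (ss_dim I) (insert e S)) = [:1, 1:] * G_poly (contraction I e)"
    unfolding G_poly_def sum_distrib_left by (rule sum.cong[OF refl])
  then show ?thesis
    unfolding G_poly_def[of I] G_poly_def[of "deletion I e"] ss_dim_deletion[OF assms(2)]
    by (simp add: sum_deletion_contraction[OF finite_indeps, of _ e])
qed

lemma G_poly_coloop:
  assumes "coloop I e"
  shows "G_poly I = [:-1, 1:] * G_poly (deletion I e)"
proof -
  let ?h = "\<lambda>d S. smult ((-2::real) ^ (d - card S)) ([:1, 1:] ^ card S)"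
  have "?h (ss_dim I) S + ?h (ss_dim I) (insert e S) = [:-1, 1:] * ?h (ss_dim (deletion I e)) S"
    if "S \<in> deletion I e" for S
  proof -
    have "card (insert e S) = Suc (card S)"
      using that finite_indep unfolding deletion_def by auto
    moreover have "card S \<le> ss_dim I - 1"
      using that card_le_ss_dim[of "deletion I e"] finite_indeps ss_dim_deletion_coloop[OF assms]
      unfolding deletion_def by simp
    moreover have "1 \<le> ss_dim I" using indep_card_le_rank[OF coloop_indep[OF assms]] by simp
    ultimately have "ss_dim I - card S = Suc (ss_dim (deletion I e) - card S)"
      and "ss_dim I - card (insert e S) = ss_dim (deletion I e) - card S"
      and "card (insert e S) = Suc (card S)"
      using ss_dim_deletion_coloop[OF assms] by auto
    then show ?thesis
      by (simp add: poly_eq_poly_eq_iff[symmetric] fun_eq_iff algebra_simps)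
  qed
  then show ?thesis
    unfolding G_poly_def sum_deletion_contraction[OF finite_indeps, of _ e]
      contraction_coloop[OF assms] sum.distrib[symmetric] sum_distrib_left
    by (rule sum.cong[OF refl])
qed

lemma pderiv_G_poly: "pderiv (G_poly I) = (\<Sum>e\<in>E. G_poly (contraction I e))"
proof -
  let ?g = "\<lambda>S. smult ((-2::real) ^ (ss_dim I - card S)) ([:1, 1:] ^ (card S - 1))"
  have "pderiv (G_poly I) = (\<Sum>S\<in>I. \<Sum>e\<in>{e\<in>E. e \<in> S}. ?g S)"
    unfolding G_poly_def higher_pderiv_sum[of 1, simplified]
  proof (intro sum.cong refl)
    fix S assume "S \<in> I"
    then have "{e\<in>E. e \<in> S} = S" using indep_subset_ground by auto
    then show "pderiv (smult ((-2) ^ (ss_dim I - card S)) ([:1, 1:] ^ card S))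
        = (\<Sum>e\<in>{e\<in>E. e \<in> S}. ?g S)"
      by (simp add: pderiv_smult pderiv_power pderiv_pCons of_nat_poly)
  qed
  also have "\<dots> = (\<Sum>e\<in>E. \<Sum>S\<in>{S\<in>I. e \<in> S}. ?g S)"
    by (rule sum.swap_restrict[OF finite_indeps finite_ground])
  also have "\<dots> = (\<Sum>e\<in>E. G_poly (contraction I e))"
  proof (intro sum.cong refl)
    fix e
    show "(\<Sum>S\<in>{S\<in>I. e \<in> S}. ?g S) = G_poly (contraction I e)"
    proof (cases "{e} \<in> I")
      case True
      have "?g (insert e S)
          = smult ((-2) ^ (ss_dim (contraction I e) - card S)) ([:1, 1:] ^ card S)"
        if "S \<in> contraction I e" for S
      proof -
        have "e \<notin> S" "finite S"
          using that finite_indep[of "insert e S"] unfolding contraction_def by auto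
        then show ?thesis using ss_dim_contraction[OF True] by simp
      qed
      then show ?thesis
        unfolding G_poly_def sum_containing_eq_sum_contraction by (rule sum.cong[OF refl])
    next
      case False
      then have no_S: "{S\<in>I. e \<in> S} = {}" using indep_subset[of _ "{e}"] by blast
      show ?thesis unfolding G_poly_def contraction_loop[OF False] no_S by simp
    qed
  qed
  finally show ?thesis .
qed

lemma coeff_G_poly_Suc_nonneg:
  assumes "\<And>e. e \<in> E \<Longrightarrow> {e} \<in> I \<Longrightarrow> 0 \<le> coeff (G_poly (contraction I e)) j"
  shows "0 \<le> coeff (G_poly I) (Suc j)"
proof -
  have "0 \<le> coeff (G_poly (contraction I e)) j" if "e \<in> E" for e
    using assms[OF that] contraction_loop by (cases "{e} \<in> I") (auto simp: G_poly_def)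
  then have "0 \<le> coeff (pderiv (G_poly I)) j"
    unfolding pderiv_G_poly coeff_sum by (rule sum_nonneg)
  then show ?thesis by (simp add: coeff_pderiv zero_le_mult_iff)
qed

lemma G_poly_all_loops:
  assumes "\<And>e. {e} \<notin> I"
  shows "G_poly I = 1"
proof -
  have "S = {}" if "S \<in> I" for S
    using assms indep_subset[OF that, of "{_}"] by blast
  then have "I = {{}}" using empty_indep by blast
  then show ?thesis by (simp add: G_poly_def ss_dim_def)
qed

lemma coeff_G_poly_ss_dim_pos: "0 < coeff (G_poly I) (ss_dim I)"
proof -
  have "finite (bases I)" using finite_indeps unfolding bases_def by simp
  then have "0 < card (bases I)" using bases_nonempty card_gt_0_iff by blast
  then show ?thesis using coeff_G_poly_ss_dim[OF finite_indeps] by simp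
qed

end

section \<open>Nonnegativity of the coefficients\<close>

lemma coeff_G_poly_0_nonneg_step:
  fixes E :: "'a set" and I :: "'a set set"
  assumes M: "matroid E I" and free: "coloop_free I"
    and IH: "\<And>E' :: 'a set. \<And>I'. card E' < card E \<Longrightarrow> matroid E' I' \<Longrightarrow> coloop_free I' \<Longrightarrow>
      0 \<le> coeff (G_poly I') 0"
  shows "0 \<le> coeff (G_poly I) 0"
proof (cases "\<exists>e. {e} \<in> I")
  case False
  then show ?thesis using G_poly_all_loops[OF M] by simp
next
  case True
  then obtain e where e: "{e} \<in> I" by blast
  let ?D = "deletion I e" and ?C = "contraction I e"
  have "e \<in> E" using indep_subset_ground[OF M e] by simp
  then have smaller: "card (E - {e}) < card E" by (rule card_Diff1_less[OF finite_ground[OF M]])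
  then have smaller2: "card (E - {e} - {f}) < card E" for f
    using card_Diff1_le[of "E - {e}" f] finite_ground[OF M] by simp
  have MD: "matroid (E - {e}) ?D" and MC: "matroid (E - {e}) ?C" and free_C: "coloop_free ?C"
    using matroid_deletion[OF M] matroid_contraction[OF M e] coloop_free_contraction[OF M free e] .
  have split: "coeff (G_poly I) 0 = coeff (G_poly ?D) 0 + coeff (G_poly ?C) 0"
    using G_poly_deletion_contraction[OF M e] free unfolding coloop_free_def
    by (simp add: coeff_mult_0)
  have C_nonneg: "0 \<le> coeff (G_poly ?C) 0" using IH[OF smaller MC free_C] .
  show ?thesis
  proof (cases "coloop_free ?D")
    case True
    then show ?thesis using split C_nonneg IH[OF smaller MD] by simp
  next
    case False
    then obtain f where f: "coloop ?D f" unfolding coloop_free_def by blast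
    let ?N = "deletion ?D f"
    have D_coeff: "coeff (G_poly ?D) 0 = - coeff (G_poly ?N) 0"
      using G_poly_coloop[OF MD f] by (simp add: coeff_mult_0)
    have C_del: "deletion ?C f = ?N"
      using deletion_contraction_eq_deletion_deletion[OF M free f] .
    show ?thesis
    proof (cases "{f} \<in> ?C")
      case True
      have "coeff (G_poly ?C) 0 = coeff (G_poly ?N) 0 + coeff (G_poly (contraction ?C f)) 0"
        using G_poly_deletion_contraction[OF MC True] free_C C_del unfolding coloop_free_def
        by (simp add: coeff_mult_0)
      moreover have "0 \<le> coeff (G_poly (contraction ?C f)) 0"
        using IH[OF smaller2 matroid_contraction[OF MC True]
            coloop_free_contraction[OF MC free_C True]] .
      ultimately show ?thesis using split D_coeff by simp
    next
      case False
      then have "?C = ?N" using deletion_loop[OF MC] C_del by simp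
      then show ?thesis using split D_coeff by simp
    qed
  qed
qed

lemma coeff_G_poly_nonneg_if_coloop_free:
  "matroid E I \<Longrightarrow> coloop_free I \<Longrightarrow> 0 \<le> coeff (G_poly I) i"
proof (induction "card E" arbitrary: E I i rule: less_induct)
  case less
  show ?case
  proof (cases i)
    case 0
    then show ?thesis using coeff_G_poly_0_nonneg_step less by blast
  next
    case (Suc j)
    have "0 \<le> coeff (G_poly (contraction I e)) j" if "e \<in> E" "{e} \<in> I" for e
    proof (rule less.hyps)
      show "card (E - {e}) < card E"
        by (rule card_Diff1_less[OF finite_ground[OF less.prems(1)] that(1)])
      show "matroid (E - {e}) (contraction I e)"
        by (rule matroid_contraction[OF less.prems(1) that(2)])
      show "coloop_free (contraction I e)"
        by (rule coloop_free_contraction[OF less.prems that(2)])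
    qed
    then show ?thesis using coeff_G_poly_Suc_nonneg[OF less.prems(1)] Suc by blast
  qed
qed

lemma G_poly_factorization:
  "matroid E I \<Longrightarrow> \<exists>k q. G_poly I = [:-1, 1:] ^ k * q \<and> (\<forall>i. 0 \<le> coeff q i) \<and> 0 < poly q 1"
proof (induction "card E" arbitrary: E I rule: less_induct)
  case less
  show ?case
  proof (cases "coloop_free I")
    case True
    then have "\<forall>i. 0 \<le> coeff (G_poly I) i"
      using coeff_G_poly_nonneg_if_coloop_free less.prems by blast
    moreover have "0 < poly (G_poly I) 1"
      using calculation coeff_G_poly_ss_dim_pos[OF less.prems]
      by (intro poly_one_pos_if_coeffs_nonneg) auto
    ultimately show ?thesis by (intro exI[of _ 0] exI[of _ "G_poly I"]) simp
  next
    case False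
    then obtain f where f: "coloop I f" unfolding coloop_free_def by blast
    have "f \<in> E" using indep_subset_ground[OF less.prems coloop_indep[OF less.prems f]] by simp
    then have "card (E - {f}) < card E" by (rule card_Diff1_less[OF finite_ground[OF less.prems]])
    then obtain k q where "G_poly (deletion I f) = [:-1, 1:] ^ k * q"
      and "\<forall>i. 0 \<le> coeff q i" and "0 < poly q 1"
      using less.hyps matroid_deletion[OF less.prems] by blast
    moreover from this(1) have "G_poly I = [:-1, 1:] ^ Suc k * q"
      using G_poly_coloop[OF less.prems f] by (simp only: power_Suc mult.assoc)
    ultimately show ?thesis by blast
  qed
qed

theorem theorem6p4:
  fixes E :: "'a set" and \<I> :: "'a set set"
  assumes "matroid E \<I>"
  shows "in_J_plus \<I>"
proof -
  obtain k q where G: "G_poly \<I> = [:-1, 1:] ^ k * q" and q: "\<forall>i. 0 \<le> coeff q i" "0 < poly q 1"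
    using G_poly_factorization[OF assms] by blast
  have "J_poly \<I> = q"
    using J_poly_eqI[OF finite_indeps[OF assms] _ G] empty_indep[OF assms] q(2) by auto
  then show ?thesis unfolding in_J_plus_def using q(1) by simp
qed

end
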